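(* Let $f\colon X\to Y$ be a map between two simply-connected spaces. If $H_*(\Omega X;\mathbb Z)$ is torsion-free and $(\Omega f)_*\colon H_*(\Omega X;\mathbf k)\to H_*(\Omega Y;\mathbf k)$ is onto for every field $\mathbf k$, then $H_*(\Omega Y;\mathbb Z)$ is also torsion-free.
   Context: $\Omega$ denotes the based loop space functor and $\Omega f$ the induced map of loop spaces. *)

theory Defs
  imports "HOL-Homology.Homology" "HOL-Algebra.Ring"
begin

definition simply_connected_space :: "'a topology \<Rightarrow> bool" where
  "simply_connected_space X \<equiv>
     topspace X \<noteq> {} \<and> path_connected_space X \<and>
     (\<forall>g. pathin X g \<and> g 1 = g 0 \<longrightarrow>
        homotopic_with (\<lambda>h. h 1 = h 0) (top_of_set {0..1}) X g (\<lambda>_. g 0))"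

text \<open>Loops are represented canonically: they are constant at the base point
  outside the parameter interval [0,1].\<close>

definition loops :: "'a topology \<Rightarrow> 'a \<Rightarrow> (real \<Rightarrow> 'a) set" where
  "loops X x0 = {g. pathin X g \<and> g 0 = x0 \<and> g 1 = x0 \<and> (\<forall>t. t \<notin> {0..1} \<longrightarrow> g t = x0)}"

definition loop_space :: "'a topology \<Rightarrow> 'a \<Rightarrow> (real \<Rightarrow> 'a) topology" where
  "loop_space X x0 =
     subtopology
       (topology_generated_by {{g. g ` K \<subseteq> U} | K U. compact K \<and> K \<subseteq> {0..1} \<and> openin X U})
       (loops X x0)"

definition loop_map :: "('a \<Rightarrow> 'b) \<Rightarrow> (real \<Rightarrow> 'a) \<Rightarrow> (real \<Rightarrow> 'b)" where
  "loop_map f g = f \<circ> g"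

definition kchain :: "('k, 'm) ring_scheme \<Rightarrow> nat \<Rightarrow> 'a topology \<Rightarrow> (((nat \<Rightarrow> real) \<Rightarrow> 'a) \<Rightarrow> 'k) \<Rightarrow> bool" where
  "kchain R p X c \<equiv> (\<forall>\<sigma>. c \<sigma> \<in> carrier R) \<and> finite {\<sigma>. c \<sigma> \<noteq> \<zero>\<^bsub>R\<^esub>}
      \<and> (\<forall>\<sigma>. c \<sigma> \<noteq> \<zero>\<^bsub>R\<^esub> \<longrightarrow> singular_simplex p X \<sigma>)"

definition kboundary :: "('k, 'm) ring_scheme \<Rightarrow> nat \<Rightarrow> (((nat \<Rightarrow> real) \<Rightarrow> 'a) \<Rightarrow> 'k) \<Rightarrow> (((nat \<Rightarrow> real) \<Rightarrow> 'a) \<Rightarrow> 'k)" where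
  "kboundary R p c \<tau> =
     (if p = 0 then \<zero>\<^bsub>R\<^esub> else
      finsum R (\<lambda>(\<sigma>, k). ((\<ominus>\<^bsub>R\<^esub> \<one>\<^bsub>R\<^esub>) [^]\<^bsub>R\<^esub> k) \<otimes>\<^bsub>R\<^esub> c \<sigma>)
        {(\<sigma>, k). c \<sigma> \<noteq> \<zero>\<^bsub>R\<^esub> \<and> k \<le> p \<and> singular_face p k \<sigma> = \<tau>})"

definition kcycle :: "('k, 'm) ring_scheme \<Rightarrow> nat \<Rightarrow> 'a topology \<Rightarrow> (((nat \<Rightarrow> real) \<Rightarrow> 'a) \<Rightarrow> 'k) \<Rightarrow> bool" where
  "kcycle R p X c \<equiv> kchain R p X c \<and> kboundary R p c = (\<lambda>_. \<zero>\<^bsub>R\<^esub>)"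

definition kbounding :: "('k, 'm) ring_scheme \<Rightarrow> nat \<Rightarrow> 'a topology \<Rightarrow> (((nat \<Rightarrow> real) \<Rightarrow> 'a) \<Rightarrow> 'k) \<Rightarrow> bool" where
  "kbounding R p X c \<equiv> \<exists>d. kchain R (Suc p) X d \<and> kboundary R (Suc p) d = c"

definition kchain_map :: "('k, 'm) ring_scheme \<Rightarrow> nat \<Rightarrow> ('a \<Rightarrow> 'b) \<Rightarrow> (((nat \<Rightarrow> real) \<Rightarrow> 'a) \<Rightarrow> 'k)
     \<Rightarrow> (((nat \<Rightarrow> real) \<Rightarrow> 'b) \<Rightarrow> 'k)" where
  "kchain_map R p g c \<tau> = finsum R c {\<sigma>. c \<sigma> \<noteq> \<zero>\<^bsub>R\<^esub> \<and> simplex_map p g \<sigma> = \<tau>}"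

definition kinduced_onto :: "('k, 'm) ring_scheme \<Rightarrow> nat \<Rightarrow> 'a topology \<Rightarrow> 'b topology \<Rightarrow> ('a \<Rightarrow> 'b) \<Rightarrow> bool" where
  "kinduced_onto R p X Y g \<equiv>
     \<forall>z. kcycle R p Y z \<longrightarrow>
       (\<exists>w. kcycle R p X w \<and> kbounding R p Y (\<lambda>\<tau>. z \<tau> \<ominus>\<^bsub>R\<^esub> kchain_map R p g w \<tau>))"

definition torsion_free_group :: "('g, 'm) monoid_scheme \<Rightarrow> bool" where
  "torsion_free_group G \<equiv>
     \<forall>a \<in> carrier G. \<forall>n::nat. n > 0 \<and> a [^]\<^bsub>G\<^esub> n = \<one>\<^bsub>G\<^esub> \<longrightarrow> a = \<one>\<^bsub>G\<^esub>"

end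

theory Submission
  imports Defs "HOL-Algebra.IntRing" "HOL-Number_Theory.Residues"
begin

text \<open>Fix a degree \<open>m\<close> and a prime \<open>p\<close>, and let \<open>c\<close> be an \<open>m\<close>-cycle of \<open>\<Omega>Y\<close> with
  \<open>p\<cdot>c = \<partial>d\<close>. Reduced mod \<open>p\<close>, \<open>d\<close> is an \<open>\<bbbF>\<^sub>p\<close>-cycle, so by surjectivity
  \<open>d \<equiv> (\<Omega>f)\<^sub># w + \<partial>e\<close> mod \<open>p\<close> for an \<open>\<bbbF>\<^sub>p\<close>-cycle \<open>w\<close> of \<open>\<Omega>X\<close>. The integral boundary
  of a lift of \<open>w\<close> is \<open>p\<close> times a cycle, which bounds because \<open>H\<^sub>m(\<Omega>X;\<int>)\<close> has no
  \<open>p\<close>-torsion; correcting the lift by \<open>p\<close> times that bounding chain makes \<open>w\<close> the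
  reduction of an integral cycle \<open>W\<close>. Then \<open>d - (\<Omega>f)\<^sub># W - \<partial>E = p\<cdot>F\<close> for an integral
  lift \<open>E\<close> of \<open>e\<close>, and taking boundaries gives \<open>p\<cdot>\<partial>F = p\<cdot>c\<close>, so \<open>c = \<partial>F\<close>.\<close>

definition frag_div :: "int \<Rightarrow> ('x \<Rightarrow>\<^sub>0 int) \<Rightarrow> ('x \<Rightarrow>\<^sub>0 int)" where
  "frag_div n c = Abs_poly_mapping (\<lambda>\<sigma>. Poly_Mapping.lookup c \<sigma> div n)"

lemma lookup_frag_div: "Poly_Mapping.lookup (frag_div n c) = (\<lambda>\<sigma>. Poly_Mapping.lookup c \<sigma> div n)"
proof -
  have "finite {\<sigma>. Poly_Mapping.lookup c \<sigma> div n \<noteq> 0}"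
    by (rule finite_subset[of _ "Poly_Mapping.keys c"]) (auto simp: in_keys_iff)
  then show ?thesis
    unfolding frag_div_def by (rule lookup_Abs_poly_mapping)
qed

lemma frag_cmul_frag_div:
  assumes "\<And>\<sigma>. n dvd Poly_Mapping.lookup c \<sigma>"
  shows "frag_cmul n (frag_div n c) = c"
  by (rule poly_mapping_eqI) (simp add: lookup_frag_div assms)

lemma singular_chain_frag_div:
  assumes "singular_chain q X c" shows "singular_chain q X (frag_div n c)"
proof -
  have "Poly_Mapping.keys (frag_div n c) \<subseteq> Poly_Mapping.keys c"
    by (auto simp: in_keys_iff lookup_frag_div)
  with assms show ?thesis
    unfolding singular_chain_def by blast
qed

lemma frag_cmul_cancel:
  assumes "n \<noteq> 0" and "frag_cmul n a = frag_cmul n b"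
  shows "a = b"
proof (rule poly_mapping_eqI)
  fix \<sigma>
  have "n * Poly_Mapping.lookup a \<sigma> = n * Poly_Mapping.lookup b \<sigma>"
    using arg_cong[OF assms(2), of "\<lambda>x. Poly_Mapping.lookup x \<sigma>"] by simp
  then show "Poly_Mapping.lookup a \<sigma> = Poly_Mapping.lookup b \<sigma>"
    using assms(1) by simp
qed

lemma lookup_chain_boundary:
  assumes "q > 0"
  shows "Poly_Mapping.lookup (chain_boundary q c) \<tau> =
    (\<Sum>(\<sigma>, k) \<in> {(\<sigma>, k). \<sigma> \<in> Poly_Mapping.keys c \<and> k \<le> q \<and> singular_face q k \<sigma> = \<tau>}.
       (-1) ^ k * Poly_Mapping.lookup c \<sigma>)"
proof -
  have "Poly_Mapping.lookup (chain_boundary q c) \<tau> =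
     (\<Sum>\<sigma>\<in>Poly_Mapping.keys c. \<Sum>k\<le>q. if singular_face q k \<sigma> = \<tau> then (-1) ^ k * Poly_Mapping.lookup c \<sigma> else 0)"
    using assms
    by (simp add: chain_boundary_def frag_extend_def lookup_sum sum_distrib_left if_distrib mult_ac cong: if_cong)
       (auto intro!: sum.cong simp: mult.commute)
  also have "\<dots> = (\<Sum>x \<in> Poly_Mapping.keys c \<times> {..q}.
      if singular_face q (snd x) (fst x) = \<tau> then (-1) ^ snd x * Poly_Mapping.lookup c (fst x) else 0)"
    by (simp add: sum.cartesian_product case_prod_beta)
  also have "\<dots> = (\<Sum>x \<in> {x \<in> Poly_Mapping.keys c \<times> {..q}. singular_face q (snd x) (fst x) = \<tau>}.
      (-1) ^ snd x * Poly_Mapping.lookup c (fst x))"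
    by (rule sum.inter_filter[symmetric]) simp
  also have "{x \<in> Poly_Mapping.keys c \<times> {..q}. singular_face q (snd x) (fst x) = \<tau>}
           = {(\<sigma>, k). \<sigma> \<in> Poly_Mapping.keys c \<and> k \<le> q \<and> singular_face q k \<sigma> = \<tau>}"
    by auto
  finally show ?thesis
    by (simp add: case_prod_beta)
qed

lemma lookup_chain_map:
  "Poly_Mapping.lookup (chain_map q g c) \<tau> =
    (\<Sum>\<sigma> \<in> {\<sigma> \<in> Poly_Mapping.keys c. simplex_map q g \<sigma> = \<tau>}. Poly_Mapping.lookup c \<sigma>)"
proof -
  have "Poly_Mapping.lookup (chain_map q g c) \<tau> =
     (\<Sum>\<sigma>\<in>Poly_Mapping.keys c. if simplex_map q g \<sigma> = \<tau> then Poly_Mapping.lookup c \<sigma> else 0)"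
    by (simp add: chain_map_def frag_extend_def lookup_sum if_distrib cong: if_cong)
       (auto intro!: sum.cong)
  also have "\<dots> = (\<Sum>\<sigma> \<in> {\<sigma> \<in> Poly_Mapping.keys c. simplex_map q g \<sigma> = \<tau>}. Poly_Mapping.lookup c \<sigma>)"
    by (rule sum.inter_filter[symmetric]) simp
  finally show ?thesis .
qed

lemma homologous_rel_set_mult:
  "homologous_rel_set m X {} a \<otimes>\<^bsub>homology_group (int m) X\<^esub> homologous_rel_set m X {} b
   = homologous_rel_set m X {} (a + b)"
proof -
  have "(\<Union>r\<in>homologous_rel_set m X {} a. \<Union>s\<in>homologous_rel_set m X {} b. {r + s})
        = homologous_rel_set m X {} (a + b)"
  proof (intro equalityI subsetI)
    fix x assume "x \<in> (\<Union>r\<in>homologous_rel_set m X {} a. \<Union>s\<in>homologous_rel_set m X {} b. {r + s})"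
    then obtain r s where "homologous_rel m X {} a r" "homologous_rel m X {} b s" "x = r + s"
      by auto
    then show "x \<in> homologous_rel_set m X {} (a + b)"
      unfolding homologous_rel_def by (metis add_diff_add mem_Collect_eq singular_relboundary_add)
  next
    fix x assume "x \<in> homologous_rel_set m X {} (a + b)"
    then have "homologous_rel m X {} a (x - b)"
      by (simp add: homologous_rel_def algebra_simps)
    then show "x \<in> (\<Union>r\<in>homologous_rel_set m X {} a. \<Union>s\<in>homologous_rel_set m X {} b. {r + s})"
      by force
  qed
  then show ?thesis
    by (simp add: mult_relative_homology_group)
qed

lemma homologous_rel_set_pow:
  "homologous_rel_set m X {} c [^]\<^bsub>homology_group (int m) X\<^esub> (n::nat)
   = homologous_rel_set m X {} (frag_cmul (int n) c)"
proof (induction n)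
  case 0
  have "homologous_rel_set m X {} 0 = singular_relboundary_set m X {}"
    by (auto simp: homologous_rel_def singular_relboundary_minus)
  then show ?case by simp
next
  case (Suc n)
  then show ?case
    by (simp add: homologous_rel_set_mult frag_cmul_distrib add.commute)
qed

lemma homologous_rel_set_pow_eq_one_iff:
  "homologous_rel_set m X {} c [^]\<^bsub>homology_group (int m) X\<^esub> (n::nat) = \<one>\<^bsub>homology_group (int m) X\<^esub>
   \<longleftrightarrow> singular_relboundary m X {} (frag_cmul (int n) c)"
  by (simp add: homologous_rel_set_pow homologous_rel_set_eq_relboundary)

lemma torsion_free_groupI_prime:
  assumes G: "group G"
    and no_prime_torsion:
      "\<And>a p. a \<in> carrier G \<Longrightarrow> prime (p::nat) \<Longrightarrow> a [^]\<^bsub>G\<^esub> p = \<one>\<^bsub>G\<^esub> \<Longrightarrow> a = \<one>\<^bsub>G\<^esub>"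
  shows "torsion_free_group G"
proof -
  interpret group G by (rule G)
  have "a = \<one>\<^bsub>G\<^esub>" if "n > 0" "a \<in> carrier G" "a [^]\<^bsub>G\<^esub> n = \<one>\<^bsub>G\<^esub>" for n :: nat and a
    using that
  proof (induction n arbitrary: a rule: less_induct)
    case (less n)
    show ?case
    proof (cases "n = 1")
      case True
      with less.prems show ?thesis by simp
    next
      case False
      with less.prems obtain q k where q: "prime q" and n: "n = k * q"
        by (metis dvd_def mult.commute prime_factor_nat)
      with less.prems have "k > 0" "k < n"
        using prime_gt_1_nat by (auto intro: Nat.gr0I)
      have "(a [^]\<^bsub>G\<^esub> k) [^]\<^bsub>G\<^esub> q = \<one>\<^bsub>G\<^esub>"
        using less.prems by (simp add: nat_pow_pow n)
      then have "a [^]\<^bsub>G\<^esub> k = \<one>\<^bsub>G\<^esub>"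
        using no_prime_torsion q less.prems(2) by simp
      then show ?thesis
        using less.IH \<open>k < n\<close> \<open>k > 0\<close> less.prems(2) by blast
    qed
  qed
  then show ?thesis
    unfolding torsion_free_group_def by blast
qed

lemma torsion_free_homology_cancel:
  assumes "torsion_free_group (homology_group (int m) X)" and "n > 0"
    and "singular_relcycle m X {} c" and "singular_relboundary m X {} (frag_cmul (int n) c)"
  shows "singular_relboundary m X {} c"
proof -
  have "homologous_rel_set m X {} c \<in> carrier (homology_group (int m) X)"
    using assms(3) by (simp add: carrier_relative_homology_group)
  moreover have "homologous_rel_set m X {} c [^]\<^bsub>homology_group (int m) X\<^esub> n = \<one>\<^bsub>homology_group (int m) X\<^esub>"
    using assms(4) by (simp only: homologous_rel_set_pow_eq_one_iff)
  ultimately have "homologous_rel_set m X {} c = \<one>\<^bsub>homology_group (int m) X\<^esub>"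
    using assms(1,2) unfolding torsion_free_group_def by blast
  then show ?thesis
    by (simp add: homologous_rel_set_eq_relboundary)
qed

lemma torsion_free_homology_groupI:
  assumes "\<And>p c. prime p \<Longrightarrow> singular_relboundary m X {} (frag_cmul (int p) c) \<Longrightarrow> singular_relboundary m X {} c"
  shows "torsion_free_group (homology_group (int m) X)"
proof (rule torsion_free_groupI_prime)
  fix a and p :: nat
  assume "a \<in> carrier (homology_group (int m) X)" and p: "prime p"
    and "a [^]\<^bsub>homology_group (int m) X\<^esub> p = \<one>\<^bsub>homology_group (int m) X\<^esub>"
  then obtain c where "a = homologous_rel_set m X {} c" "singular_relboundary m X {} (frag_cmul (int p) c)"
    by (auto simp: carrier_relative_homology_group homologous_rel_set_pow_eq_one_iff
        simp del: one_relative_homology_group)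
  with assms[OF p] show "a = \<one>\<^bsub>homology_group (int m) X\<^esub>"
    by (simp add: homologous_rel_set_eq_relboundary)
qed simp

text \<open>The field hypothesis quantifies over rings with carrier type \<open>nat\<close>, so \<open>\<int>/p\<close> is
  realised on \<open>{..<p}\<close>.\<close>

definition residue_nat_ring :: "nat \<Rightarrow> nat ring" where
  "residue_nat_ring p =
     \<lparr>carrier = {..<p}, monoid.mult = (\<lambda>a b. (a * b) mod p), one = 1, zero = 0, add = (\<lambda>a b. (a + b) mod p)\<rparr>"

definition residue_nat :: "nat \<Rightarrow> int \<Rightarrow> nat" where
  "residue_nat p k = nat (k mod int p)"

lemma residue_nat_ring_simps:
  "carrier (residue_nat_ring p) = {..<p}"
  "monoid.mult (residue_nat_ring p) a b = (a * b) mod p"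
  "one (residue_nat_ring p) = 1"
  "add (residue_nat_ring p) a b = (a + b) mod p"
  by (simp_all add: residue_nat_ring_def)

lemma residue_nat_ring_zero [simp]: "zero (residue_nat_ring p) = 0"
  by (simp add: residue_nat_ring_def)

lemma field_residue_nat_ring:
  assumes "prime p" shows "field (residue_nat_ring p)"
proof -
  interpret R: residues_prime p "residue_ring (int p)"
    using assms by unfold_locales auto
  have iso: "nat \<in> ring_iso (residue_ring (int p)) (residue_nat_ring p)"
  proof (rule ring_iso_memI)
    fix x y
    assume "x \<in> carrier (residue_ring (int p))" and "y \<in> carrier (residue_ring (int p))"
    then have x: "0 \<le> x" "x < int p" and y: "0 \<le> y" "y < int p"
      by (auto simp: R.res_carrier_eq)
    show "nat x \<in> carrier (residue_nat_ring p)"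
      using x by (auto simp: residue_nat_ring_simps)
    show "nat (x \<otimes>\<^bsub>residue_ring (int p)\<^esub> y) = nat x \<otimes>\<^bsub>residue_nat_ring p\<^esub> nat y"
      using x y by (simp add: residue_ring_def nat_mod_distrib nat_mult_distrib residue_nat_ring_simps)
    show "nat (x \<oplus>\<^bsub>residue_ring (int p)\<^esub> y) = nat x \<oplus>\<^bsub>residue_nat_ring p\<^esub> nat y"
      using x y by (simp add: residue_ring_def nat_mod_distrib nat_add_distrib residue_nat_ring_simps)
  next
    show "nat \<one>\<^bsub>residue_ring (int p)\<^esub> = \<one>\<^bsub>residue_nat_ring p\<^esub>"
      by (simp add: residue_ring_def residue_nat_ring_simps)
  next
    show "bij_betw nat (carrier (residue_ring (int p))) (carrier (residue_nat_ring p))"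
      unfolding R.res_carrier_eq residue_nat_ring_simps
      by (rule bij_betw_byWitness[where f' = int]) auto
  qed
  have "field ((residue_nat_ring p)\<lparr>zero := nat \<zero>\<^bsub>residue_ring (int p)\<^esub>\<rparr>)"
    by (rule R.ring_iso_imp_img_field[OF iso])
  moreover have "(residue_nat_ring p)\<lparr>zero := nat \<zero>\<^bsub>residue_ring (int p)\<^esub>\<rparr> = residue_nat_ring p"
    by (simp add: residue_ring_def residue_nat_ring_def)
  ultimately show ?thesis by simp
qed

lemma ring_hom_cring_residue_nat:
  assumes "prime p" shows "ring_hom_cring \<Z> (residue_nat_ring p) (residue_nat p)"
proof -
  have p: "int p > 0"
    using assms prime_gt_0_nat by simp
  interpret F: field "residue_nat_ring p"
    using field_residue_nat_ring[OF assms] .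
  have residue: "int (residue_nat p k) = k mod int p" for k
    using p by (simp add: residue_nat_def)
  show ?thesis
  proof (rule ring_hom_cringI[OF int_is_cring F.cring_axioms], rule ring_hom_memI)
    fix x y :: int
    show "residue_nat p x \<in> carrier (residue_nat_ring p)"
      using p by (simp add: residue_nat_def residue_nat_ring_simps nat_less_iff)
    show "residue_nat p (x \<otimes>\<^bsub>\<Z>\<^esub> y) = residue_nat p x \<otimes>\<^bsub>residue_nat_ring p\<^esub> residue_nat p y"
    proof -
      have "int (residue_nat p (x * y)) = int ((residue_nat p x * residue_nat p y) mod p)"
        by (simp add: of_nat_mod residue mod_mult_eq)
      then show ?thesis by (simp add: residue_nat_ring_simps)
    qed
    show "residue_nat p (x \<oplus>\<^bsub>\<Z>\<^esub> y) = residue_nat p x \<oplus>\<^bsub>residue_nat_ring p\<^esub> residue_nat p y"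
    proof -
      have "int (residue_nat p (x + y)) = int ((residue_nat p x + residue_nat p y) mod p)"
        by (simp add: of_nat_mod residue mod_add_eq)
      then show ?thesis by (simp add: residue_nat_ring_simps)
    qed
  next
    show "residue_nat p \<one>\<^bsub>\<Z>\<^esub> = \<one>\<^bsub>residue_nat_ring p\<^esub>"
      using prime_gt_1_nat[OF assms] by (simp add: residue_nat_def residue_nat_ring_simps)
  qed
qed

locale prime_residue_field =
  fixes p :: nat
  assumes prime: "prime p"
begin

abbreviation Fp :: "nat ring" where
  "Fp \<equiv> residue_nat_ring p"

sublocale Fp: field Fp
  by (rule field_residue_nat_ring[OF prime])

lemma p_gt_1: "1 < p"
  using prime prime_gt_1_nat by blast

lemma residue_nat_in_carrier [simp]: "residue_nat p k \<in> carrier Fp"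
  using p_gt_1 by (simp add: residue_nat_def residue_nat_ring_simps nat_less_iff)

lemma residue_nat_0 [simp]: "residue_nat p 0 = 0"
  by (simp add: residue_nat_def)

lemma residue_nat_eq_iff: "residue_nat p a = residue_nat p b \<longleftrightarrow> int p dvd a - b"
proof -
  have "int p > 0"
    using p_gt_1 by simp
  then have "residue_nat p a = residue_nat p b \<longleftrightarrow> a mod int p = b mod int p"
    by (simp add: residue_nat_def eq_nat_nat_iff)
  then show ?thesis
    by (simp add: mod_eq_dvd_iff)
qed

lemma residue_nat_eq_0_iff: "residue_nat p a = 0 \<longleftrightarrow> int p dvd a"
  using residue_nat_eq_iff[of a 0] by simp

lemma residue_nat_of_nat: "n < p \<Longrightarrow> residue_nat p (int n) = n"
  by (simp add: residue_nat_def)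

lemma
  shows residue_nat_mult: "residue_nat p (a * b) = residue_nat p a \<otimes>\<^bsub>Fp\<^esub> residue_nat p b"
    and residue_nat_diff: "residue_nat p (a - b) = residue_nat p a \<ominus>\<^bsub>Fp\<^esub> residue_nat p b"
    and residue_nat_sum: "residue_nat p (sum f A) = (\<Oplus>\<^bsub>Fp\<^esub> i \<in> A. residue_nat p (f i))"
    and residue_nat_sign: "residue_nat p ((-1) ^ k) = (\<ominus>\<^bsub>Fp\<^esub> \<one>\<^bsub>Fp\<^esub>) [^]\<^bsub>Fp\<^esub> k"
proof -
  interpret residue: ring_hom_cring \<Z> Fp "residue_nat p"
    by (rule ring_hom_cring_residue_nat[OF prime])
  show "residue_nat p (a * b) = residue_nat p a \<otimes>\<^bsub>Fp\<^esub> residue_nat p b"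
    using residue.hom_mult[of a b] by simp
  show "residue_nat p (a - b) = residue_nat p a \<ominus>\<^bsub>Fp\<^esub> residue_nat p b"
    using residue.hom_add[of a "- b"] residue.hom_a_inv[of b] by (simp add: a_minus_def int_a_inv_eq)
  show "residue_nat p (sum f A) = (\<Oplus>\<^bsub>Fp\<^esub> i \<in> A. residue_nat p (f i))"
    using residue.hom_finsum[of f A] by (simp add: int_finsum_eq comp_def)
  show "residue_nat p ((-1) ^ k) = (\<ominus>\<^bsub>Fp\<^esub> \<one>\<^bsub>Fp\<^esub>) [^]\<^bsub>Fp\<^esub> k"
    using residue.ring.hom_nat_pow[of "-1" k] residue.hom_a_inv[of 1] by (simp add: int_a_inv_eq)
qed

definition chain_mod :: "('x \<Rightarrow>\<^sub>0 int) \<Rightarrow> 'x \<Rightarrow> nat" where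
  "chain_mod c \<sigma> = residue_nat p (Poly_Mapping.lookup c \<sigma>)"

lemma chain_mod_in_carrier [simp]: "chain_mod c \<sigma> \<in> carrier Fp"
  by (simp add: chain_mod_def)

lemma chain_mod_zero [simp]: "chain_mod 0 = (\<lambda>_. 0)"
  by (simp add: chain_mod_def fun_eq_iff)

lemma in_keys_if_chain_mod_nonzero: "chain_mod c \<sigma> \<noteq> 0 \<Longrightarrow> \<sigma> \<in> Poly_Mapping.keys c"
  by (auto simp: chain_mod_def in_keys_iff)

lemma chain_mod_diff: "chain_mod (a - b) \<sigma> = chain_mod a \<sigma> \<ominus>\<^bsub>Fp\<^esub> chain_mod b \<sigma>"
  by (simp add: chain_mod_def lookup_minus residue_nat_diff)

lemma chain_mod_cmul_p [simp]: "chain_mod (frag_cmul (int p) c) = (\<lambda>_. 0)"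
  by (rule ext) (simp only: chain_mod_def lookup_frag_cmul residue_nat_eq_0_iff dvd_triv_left)

lemma chain_mod_diff_cmul_p [simp]: "chain_mod (a - frag_cmul (int p) b) = chain_mod a"
  by (rule ext) (simp add: chain_mod_def residue_nat_eq_iff lookup_minus)

lemma kchain_chain_mod:
  assumes "singular_chain q X c" shows "kchain Fp q X (chain_mod c)"
proof -
  have keys: "{\<sigma>. chain_mod c \<sigma> \<noteq> 0} \<subseteq> Poly_Mapping.keys c"
    by (auto intro: in_keys_if_chain_mod_nonzero)
  then have "finite {\<sigma>. chain_mod c \<sigma> \<noteq> 0}"
    by (rule finite_subset) simp
  moreover have "singular_simplex q X \<sigma>" if "chain_mod c \<sigma> \<noteq> 0" for \<sigma>
    using keys that assms unfolding singular_chain_def by blast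
  ultimately show ?thesis
    unfolding kchain_def by simp
qed

lemma chain_mod_chain_boundary: "chain_mod (chain_boundary q c) = kboundary Fp q (chain_mod c)"
proof
  fix \<tau>
  show "chain_mod (chain_boundary q c) \<tau> = kboundary Fp q (chain_mod c) \<tau>"
  proof (cases "q = 0")
    case True
    then show ?thesis by (simp add: chain_mod_def kboundary_def chain_boundary_def residue_nat_ring_simps)
  next
    case False
    let ?J = "{(\<sigma>, k). \<sigma> \<in> Poly_Mapping.keys c \<and> k \<le> q \<and> singular_face q k \<sigma> = \<tau>}"
    let ?I = "{(\<sigma>, k). chain_mod c \<sigma> \<noteq> \<zero>\<^bsub>Fp\<^esub> \<and> k \<le> q \<and> singular_face q k \<sigma> = \<tau>}"
    let ?f = "\<lambda>(\<sigma>, k). ((\<ominus>\<^bsub>Fp\<^esub> \<one>\<^bsub>Fp\<^esub>) [^]\<^bsub>Fp\<^esub> k) \<otimes>\<^bsub>Fp\<^esub> chain_mod c \<sigma>"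
    have "chain_mod (chain_boundary q c) \<tau>
        = (\<Oplus>\<^bsub>Fp\<^esub> x \<in> ?J. residue_nat p ((-1) ^ snd x * Poly_Mapping.lookup c (fst x)))"
      using False by (simp add: chain_mod_def lookup_chain_boundary residue_nat_sum case_prod_beta)
    also have "\<dots> = finsum Fp ?f ?J"
      by (intro Fp.finsum_cong') (auto simp: residue_nat_mult residue_nat_sign chain_mod_def)
    also have "\<dots> = finsum Fp ?f ?I"
    proof (rule Fp.add.finprod_mono_neutral_cong_right)
      show "finite ?J"
        by (rule finite_subset[of _ "Poly_Mapping.keys c \<times> {..q}"]) auto
      show "?I \<subseteq> ?J"
        using in_keys_if_chain_mod_nonzero by (auto simp: residue_nat_ring_simps)
      show "?f x = \<zero>\<^bsub>Fp\<^esub>" if "x \<in> ?J - ?I" for x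
        using that Fp.r_null[of "(\<ominus>\<^bsub>Fp\<^esub> \<one>\<^bsub>Fp\<^esub>) [^]\<^bsub>Fp\<^esub> snd x"] by (auto simp: case_prod_beta)
      show "?f \<in> ?J \<rightarrow> carrier Fp"
        by auto
    qed simp
    also have "\<dots> = kboundary Fp q (chain_mod c) \<tau>"
      using False by (simp add: kboundary_def)
    finally show ?thesis .
  qed
qed

lemma chain_mod_chain_map: "chain_mod (chain_map q g c) = kchain_map Fp q g (chain_mod c)"
proof
  fix \<tau>
  let ?J = "{\<sigma> \<in> Poly_Mapping.keys c. simplex_map q g \<sigma> = \<tau>}"
  let ?I = "{\<sigma>. chain_mod c \<sigma> \<noteq> \<zero>\<^bsub>Fp\<^esub> \<and> simplex_map q g \<sigma> = \<tau>}"
  have "chain_mod (chain_map q g c) \<tau> = finsum Fp (chain_mod c) ?J"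
    unfolding chain_mod_def[abs_def] by (simp add: lookup_chain_map residue_nat_sum)
  also have "\<dots> = finsum Fp (chain_mod c) ?I"
    by (rule Fp.add.finprod_mono_neutral_cong_right) (use in_keys_if_chain_mod_nonzero in auto)
  also have "\<dots> = kchain_map Fp q g (chain_mod c) \<tau>"
    by (simp add: kchain_map_def)
  finally show "chain_mod (chain_map q g c) \<tau> = kchain_map Fp q g (chain_mod c) \<tau>" .
qed

lemma p_multiple_if_chain_mod_eq:
  assumes "singular_chain q X a" and "singular_chain q X b" and "chain_mod a = chain_mod b"
  obtains F where "singular_chain q X F" and "a - b = frag_cmul (int p) F"
proof
  have "int p dvd Poly_Mapping.lookup (a - b) \<sigma>" for \<sigma>
    using fun_cong[OF assms(3), of \<sigma>] by (simp add: chain_mod_def residue_nat_eq_iff lookup_minus)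
  then show "a - b = frag_cmul (int p) (frag_div (int p) (a - b))"
    by (simp add: frag_cmul_frag_div)
  show "singular_chain q X (frag_div (int p) (a - b))"
    by (intro singular_chain_frag_div singular_chain_diff assms(1,2))
qed

definition chain_lift :: "('x \<Rightarrow> nat) \<Rightarrow> ('x \<Rightarrow>\<^sub>0 int)" where
  "chain_lift w = Abs_poly_mapping (\<lambda>\<sigma>. int (w \<sigma>))"

lemma
  assumes "kchain Fp q X w"
  shows singular_chain_chain_lift: "singular_chain q X (chain_lift w)"
    and chain_mod_chain_lift: "chain_mod (chain_lift w) = w"
proof -
  have "finite {\<sigma>. w \<sigma> \<noteq> 0}"
    using assms by (simp add: kchain_def residue_nat_ring_simps)
  then have lookup: "Poly_Mapping.lookup (chain_lift w) = (\<lambda>\<sigma>. int (w \<sigma>))"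
    unfolding chain_lift_def by (intro lookup_Abs_poly_mapping) simp
  show "singular_chain q X (chain_lift w)"
    using assms by (auto simp: singular_chain_def kchain_def in_keys_iff lookup residue_nat_ring_simps)
  have "w \<sigma> < p" for \<sigma>
    using assms by (auto simp: kchain_def residue_nat_ring_simps)
  then show "chain_mod (chain_lift w) = w"
    by (auto simp: chain_mod_def lookup residue_nat_of_nat)
qed

lemma kcycle_lifts_to_cycle:
  assumes tf: "torsion_free_group (homology_group (int m) A)" and w: "kcycle Fp (Suc m) A w"
  obtains W where "singular_chain (Suc m) A W" and "chain_boundary (Suc m) W = 0" and "chain_mod W = w"
proof -
  let ?W = "chain_lift w"
  have "kchain Fp (Suc m) A w"
    using w by (simp add: kcycle_def)
  then have W: "singular_chain (Suc m) A ?W" "chain_mod ?W = w"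
    by (rule singular_chain_chain_lift, rule chain_mod_chain_lift)
  have "chain_mod (chain_boundary (Suc m) ?W) = chain_mod 0"
    using w by (simp add: chain_mod_chain_boundary W(2) kcycle_def)
  then obtain V where V: "singular_chain m A V" "chain_boundary (Suc m) ?W - 0 = frag_cmul (int p) V"
    by (rule p_multiple_if_chain_mod_eq[OF singular_chain_boundary_alt[OF W(1)] singular_chain_0])
  then have bW: "chain_boundary (Suc m) ?W = frag_cmul (int p) V"
    by simp
  have "frag_cmul (int p) (chain_boundary m V) = 0"
    using chain_boundary_boundary_alt[OF W(1)] bW by (simp add: chain_boundary_cmul)
  then have cycle: "singular_relcycle m A {} V"
    using V(1) p_gt_1 by (simp add: singular_cycle)
  have "singular_relboundary m A {} (frag_cmul (int p) V)"
    unfolding singular_boundary using W(1) bW by blast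
  then have "singular_relboundary m A {} V"
    using p_gt_1 by (intro torsion_free_homology_cancel[OF tf _ cycle]) simp_all
  then obtain U where U: "singular_chain (Suc m) A U" "chain_boundary (Suc m) U = V"
    by (auto simp: singular_boundary)
  show thesis
  proof
    show "singular_chain (Suc m) A (?W - frag_cmul (int p) U)"
      by (intro singular_chain_diff singular_chain_cmul W(1) U(1))
    show "chain_boundary (Suc m) (?W - frag_cmul (int p) U) = 0"
      by (simp add: chain_boundary_diff chain_boundary_cmul bW U(2))
    show "chain_mod (?W - frag_cmul (int p) U) = w"
      using W(2) by (simp add: chain_mod_diff_cmul_p)
  qed
qed

lemma singular_relboundary_cancel_p:
  assumes tf: "torsion_free_group (homology_group (int m) A)"
    and g: "continuous_map A B g"
    and onto: "kinduced_onto Fp (Suc m) A B g"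
    and pc: "singular_relboundary m B {} (frag_cmul (int p) c)"
  shows "singular_relboundary m B {} c"
proof -
  obtain d where d: "singular_chain (Suc m) B d" "chain_boundary (Suc m) d = frag_cmul (int p) c"
    using pc by (auto simp: singular_boundary)
  have "kboundary Fp (Suc m) (chain_mod d) = (\<lambda>_. 0)"
    by (simp add: chain_mod_chain_boundary[symmetric] d(2))
  then have "kcycle Fp (Suc m) B (chain_mod d)"
    using kchain_chain_mod[OF d(1)] by (simp add: kcycle_def)
  then obtain w e where w: "kcycle Fp (Suc m) A w"
    and e: "kchain Fp (Suc (Suc m)) B e"
      "kboundary Fp (Suc (Suc m)) e = (\<lambda>\<tau>. chain_mod d \<tau> \<ominus>\<^bsub>Fp\<^esub> kchain_map Fp (Suc m) g w \<tau>)"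
    using onto unfolding kinduced_onto_def kbounding_def by blast
  obtain W where W: "singular_chain (Suc m) A W" "chain_boundary (Suc m) W = 0" "chain_mod W = w"
    using kcycle_lifts_to_cycle[OF tf w] by blast
  let ?E = "chain_lift e"
  have E: "singular_chain (Suc (Suc m)) B ?E" "chain_mod ?E = e"
    using e(1) by (rule singular_chain_chain_lift, rule chain_mod_chain_lift)
  have "chain_mod (d - chain_map (Suc m) g W) = chain_mod (chain_boundary (Suc (Suc m)) ?E)"
    by (simp add: fun_eq_iff chain_mod_diff chain_mod_chain_map chain_mod_chain_boundary W(3) E(2) e(2))
  then obtain F where F: "singular_chain (Suc m) B F"
    "d - chain_map (Suc m) g W - chain_boundary (Suc (Suc m)) ?E = frag_cmul (int p) F"
    by (rule p_multiple_if_chain_mod_eq[OF singular_chain_diff[OF d(1) singular_chain_chain_map[OF W(1) g]]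
          singular_chain_boundary_alt[OF E(1)]])
  have "frag_cmul (int p) (chain_boundary (Suc m) F) = frag_cmul (int p) c"
    using arg_cong[OF F(2), of "chain_boundary (Suc m)"]
    by (simp add: chain_boundary_diff chain_boundary_cmul d(2) chain_boundary_chain_map[OF W(1)] W(2)
        chain_boundary_boundary_alt[OF E(1)])
  then have "chain_boundary (Suc m) F = c"
    by (rule frag_cmul_cancel[rotated]) (use p_gt_1 in simp)
  with F(1) show ?thesis
    by (auto simp: singular_boundary)
qed

end

lemma topspace_loop_space: "topspace (loop_space X x0) = loops X x0"
proof -
  have "UNIV \<in> {{g. g ` K \<subseteq> U} | K U. compact K \<and> K \<subseteq> {0..1} \<and> openin X U}"
    by (rule CollectI, rule exI[of _ "{}"], rule exI[of _ "{}"]) auto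
  then have "\<Union>{{g :: real \<Rightarrow> 'a. g ` K \<subseteq> U} | K U. compact K \<and> K \<subseteq> {0..1} \<and> openin X U} = UNIV"
    by blast
  then show ?thesis
    by (simp add: loop_space_def)
qed

lemma continuous_map_loop_map:
  assumes f: "continuous_map X Y f"
  shows "continuous_map (loop_space X x0) (loop_space Y (f x0)) (loop_map f)"
proof -
  let ?SX = "{{g. g ` K \<subseteq> U} | K U. compact K \<and> K \<subseteq> {0..1} \<and> openin X U}"
  let ?SY = "{{g. g ` K \<subseteq> U} | K U. compact K \<and> K \<subseteq> {0..1} \<and> openin Y U}"
  have loops: "loop_map f g \<in> loops Y (f x0)" if "g \<in> loops X x0" for g
    using that f by (auto simp: loops_def loop_map_def pathin_def intro: continuous_map_compose)
  have preimage_open: "openin (loop_space X x0) {g \<in> loops X x0. loop_map f g \<in> V}"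
    if "generate_topology_on ?SY V" for V
    using that
  proof (induction rule: generate_topology_on.induct)
    case Empty
    then show ?case by simp
  next
    case (Int a b)
    have "{g \<in> loops X x0. loop_map f g \<in> a \<inter> b} =
          {g \<in> loops X x0. loop_map f g \<in> a} \<inter> {g \<in> loops X x0. loop_map f g \<in> b}"
      by blast
    with Int show ?case
      by (simp add: openin_Int)
  next
    case (UN K)
    have "{g \<in> loops X x0. loop_map f g \<in> \<Union>K} = (\<Union>k\<in>K. {g \<in> loops X x0. loop_map f g \<in> k})"
      by blast
    with UN show ?case
      by (auto intro!: openin_Union)
  next
    case (Basis s)
    then obtain K U where s: "s = {g. g ` K \<subseteq> U}" "compact K" "K \<subseteq> {0..1}" "openin Y U"
      by blast
    define W where "W = {x \<in> topspace X. f x \<in> U}"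
    have "openin X W"
      unfolding W_def using f s(4) by (rule openin_continuous_map_preimage)
    with s have "openin (topology_generated_by ?SX) {g. g ` K \<subseteq> W}"
      by (intro topology_generated_by_Basis) blast
    moreover have "{g \<in> loops X x0. loop_map f g \<in> s} = loops X x0 \<inter> {g. g ` K \<subseteq> W}"
      using s(3) by (fastforce simp: s(1) W_def loop_map_def loops_def pathin_def continuous_map_def)
    ultimately show ?case
      by (auto simp: loop_space_def openin_subtopology)
  qed
  show ?thesis
    unfolding continuous_map_def topspace_loop_space
  proof (intro conjI allI impI)
    show "loop_map f \<in> loops X x0 \<rightarrow> loops Y (f x0)"
      using loops by blast
  next
    fix U assume "openin (loop_space Y (f x0)) U"
    then obtain V where V: "openin (topology_generated_by ?SY) V" "U = V \<inter> loops Y (f x0)"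
      unfolding loop_space_def openin_subtopology by blast
    then have "{g \<in> loops X x0. loop_map f g \<in> U} = {g \<in> loops X x0. loop_map f g \<in> V}"
      using loops by blast
    then show "openin (loop_space X x0) {g \<in> loops X x0. loop_map f g \<in> U}"
      using preimage_open[OF openin_topology_generated_by[OF V(1)]] by simp
  qed
qed

theorem mainTheorem8:
  fixes X :: "'a topology" and Y :: "'b topology" and f :: "'a \<Rightarrow> 'b" and x0 :: 'a
  assumes "simply_connected_space X" and "simply_connected_space Y"
    and "continuous_map X Y f" and "x0 \<in> topspace X"
    and "\<forall>p. torsion_free_group (homology_group p (loop_space X x0))"
    and "\<forall>(R :: nat ring) n. field R \<longrightarrow>
           kinduced_onto R n (loop_space X x0) (loop_space Y (f x0)) (loop_map f)"
  shows "\<forall>p. torsion_free_group (homology_group p (loop_space Y (f x0)))"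
proof
  fix q :: int
  show "torsion_free_group (homology_group q (loop_space Y (f x0)))"
  proof (cases "q < 0")
    case True
    then have "trivial_group (homology_group q (loop_space Y (f x0)))"
      by simp
    then show ?thesis
      unfolding torsion_free_group_def trivial_group_def by auto
  next
    case False
    then obtain m where q: "q = int m"
      by (metis nonneg_int_cases not_less)
    have "singular_relboundary m (loop_space Y (f x0)) {} c"
      if p: "prime p" and pc: "singular_relboundary m (loop_space Y (f x0)) {} (frag_cmul (int p) c)" for p c
    proof -
      interpret prime_residue_field p
        using p by unfold_locales
      show ?thesis
        using assms(6) field_residue_nat_ring[OF p]
        by (intro singular_relboundary_cancel_p[OF assms(5)[rule_format] continuous_map_loop_map[OF assms(3)] _ pc])
           simp
    qed
    then show ?thesis
      unfolding q by (intro torsion_free_homology_groupI)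
  qed
qed

end
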